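(* Let $\frac{A}{B}\in \mathcal{F}_n(k)$ and $u\in k^\times$. Then the Bézout form of $\frac{X}{u} \oplus^{\mathrm{N}} \frac{A}{B}$ is conjugate by an element of $\mathbf{SL}_{n+1}(k)$ to the block diagonal form $\langle u \rangle \oplus \mathrm{B\acute{e}z}_n(A,B)$.
   Context: Let $k$ be a field. $\mathcal{F}_n(k)$ is the set of pointed degree $n$ rational functions $\frac AB$: $A\in k[X]$ monic of degree $n$, $\deg B<n$, $\mathrm{res}_{n,n}(A,B)\neq0$, with unique Bézout relation $AU+BV=1$ ($\deg U\leq n-2$, $\deg V\leq n-1$). The law $\oplus^{\mathrm{N}}$: $\frac{A_1}{B_1}\oplus^{\mathrm{N}}\frac{A_2}{B_2}=\frac{A_3}{B_3}$ with $\begin{bmatrix}A_3 & -V_3\\ B_3 & U_3\end{bmatrix} = \begin{bmatrix}A_1 & -V_1\\ B_1 & U_1\end{bmatrix}\begin{bmatrix}A_2 & -V_2\\ B_2 & U_2\end{bmatrix}$; in particular $\frac{X}{u}\oplus^{\mathrm{N}}\frac AB=\frac{XA-B/u}{uA}$. The Bézout form $\mathrm{B\acute{e}z}_n(A,B)$ is the symmetric bilinear form on $k^n$ with Gram matrix $[c_{p,q}]_{1\le p,q\le n}$ where $\frac{A(X)B(Y)-A(Y)B(X)}{X-Y}=\sum c_{p,q}X^{p-1}Y^{q-1}$. $\langle u\rangle$ is the rank one form with Gram matrix $(u)$. *)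

theory Defs
  imports "Subresultants.Resultant_Prelim"
begin

definition res_nn :: "nat \<Rightarrow> 'a::comm_ring_1 poly \<Rightarrow> 'a poly \<Rightarrow> 'a" where
  "res_nn n A B = det (sylvester_mat_sub n n A B)"

text \<open>Pointed degree n rational functions A/B, represented by the pair (A,B).\<close>
definition pointed_rat_fun :: "nat \<Rightarrow> 'a::field poly \<Rightarrow> 'a poly \<Rightarrow> bool" where
  "pointed_rat_fun n A B \<longleftrightarrow>
     degree A = n \<and> lead_coeff A = 1 \<and> (B = 0 \<or> degree B < n) \<and> res_nn n A B \<noteq> 0"

text \<open>Bivariate polynomials as 'a poly poly: outer variable Y, inner variable X.
  The Bezoutian (A(X)B(Y) - A(Y)B(X)) / (X - Y).\<close>
definition bezoutian :: "'a::field poly \<Rightarrow> 'a poly \<Rightarrow> 'a poly poly" where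
  "bezoutian A B =
     ([:A:] * map_poly (\<lambda>c. [:c:]) B - map_poly (\<lambda>c. [:c:]) A * [:B:])
       div [:[:0, 1:], -1:]"

text \<open>Gram matrix of Bez_n(A,B): entry (i,j) (0-based) is the coefficient of X^i Y^j.\<close>
definition bez_mat :: "nat \<Rightarrow> 'a::field poly \<Rightarrow> 'a poly \<Rightarrow> 'a mat" where
  "bez_mat n A B = mat n n (\<lambda>(i, j). coeff (coeff (bezoutian A B) j) i)"

text \<open>The law X/u (+)^N A/B = (XA - B/u)/(uA), as the pair (numerator, denominator).\<close>
definition oplusN_lin :: "'a::field \<Rightarrow> 'a poly \<Rightarrow> 'a poly \<Rightarrow> 'a poly \<times> 'a poly" where
  "oplusN_lin u A B = ([:0, 1:] * A - smult (inverse u) B, smult u A)"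

end

theory Submission
  imports Defs
begin

text \<open>Clearing the denominator \<open>X - Y\<close> shows
  \<open>Bez(XA - B/u, uA) = u A(X) A(Y) + Bez(A, B)\<close>, so the Gram matrix of the new form is
  \<open>u a a\<^sup>T + C\<close>, where \<open>a\<close> is the coefficient vector of \<open>A\<close> and \<open>C\<close> is the Gram matrix of
  \<open>Bez(A, B)\<close> padded by a zero row and column (the Bezoutian of polynomials of degree \<open>\<le> n\<close> has
  degree \<open>< n\<close> in each variable). Since \<open>a\<^sub>n = 1\<close>, the unimodular change of basis with
  columns \<open>\<plusminus>e\<^sub>n\<close> and \<open>e\<^sub>j - a\<^sub>j e\<^sub>n\<close> (\<open>j < n\<close>) has transpose mapping \<open>a\<close> to \<open>\<plusminus>e\<^sub>0\<close> and leaves \<open>C\<close>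
  unchanged.\<close>

abbreviation in_Y :: "'a::zero poly \<Rightarrow> 'a poly poly" where
  "in_Y p \<equiv> map_poly (\<lambda>c. [:c:]) p"

definition bez_numerator :: "'a::comm_ring_1 poly \<Rightarrow> 'a poly \<Rightarrow> 'a poly poly" where
  "bez_numerator A B = [:A:] * in_Y B - in_Y A * [:B:]"

lemma coeff_bez_numerator:
  "coeff (bez_numerator A B) k = smult (coeff B k) A - smult (coeff A k) B"
  unfolding bez_numerator_def by (simp add: coeff_map_poly mult.commute[of _ "[:B:]"])

lemma poly_in_Y_X: "poly (in_Y p) [:0, 1:] = (p :: 'a::comm_ring_1 poly)"
  by (induction p) simp_all

lemma X_minus_Y_dvd_bez_numerator:
  "[:[:0, 1:], -1:] dvd (bez_numerator A B :: 'a::comm_ring_1 poly poly)"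
proof -
  have "poly (bez_numerator A B) [:0, 1:] = 0"
    unfolding bez_numerator_def by (simp add: poly_in_Y_X)
  then have "[:- [:0, 1:], 1:] dvd bez_numerator A B"
    using poly_eq_0_iff_dvd by blast
  moreover have "[:[:0, 1:], -1:] = - [:- [:0, 1:], 1:]"
    by simp
  ultimately show ?thesis
    by (metis minus_dvd_iff)
qed

lemma bez_numerator_eq: "bez_numerator A B = [:[:0, 1:], -1:] * bezoutian A B"
  using X_minus_Y_dvd_bez_numerator[of A B]
  unfolding bezoutian_def bez_numerator_def[symmetric] by (metis dvd_mult_div_cancel)

lemma coeff_X_minus_Y_mult:
  fixes Q :: "'a::comm_ring_1 poly poly"
  shows "coeff ([:[:0, 1:], -1:] * Q) k =
     [:0, 1:] * coeff Q k - (if k = 0 then 0 else coeff Q (k - 1))"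
  by (cases k) simp_all

lemma bez_numerator_oplusN_lin:
  fixes A B :: "'a::field poly"
  assumes "u \<noteq> 0"
  shows "bez_numerator (fst (oplusN_lin u A B)) (snd (oplusN_lin u A B))
     = [:[:0, 1:], -1:] * ([:smult u A:] * in_Y A) + bez_numerator A B"
proof (rule poly_eqI)
  fix k
  show "coeff (bez_numerator (fst (oplusN_lin u A B)) (snd (oplusN_lin u A B))) k =
        coeff ([:[:0, 1:], -1:] * ([:smult u A:] * in_Y A) + bez_numerator A B) k"
    using assms
    by (cases k) (simp_all add: oplusN_lin_def coeff_bez_numerator coeff_X_minus_Y_mult
        coeff_map_poly algebra_simps smult_diff_right smult_diff_left mult.assoc[symmetric])
qed

lemma bezoutian_oplusN_lin:
  fixes A B :: "'a::field poly"
  assumes "u \<noteq> 0"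
  shows "bezoutian (fst (oplusN_lin u A B)) (snd (oplusN_lin u A B))
     = [:smult u A:] * in_Y A + bezoutian A B"
proof -
  let ?D = "[:[:0, 1:], -1:] :: 'a poly poly"
  have "?D * bezoutian (fst (oplusN_lin u A B)) (snd (oplusN_lin u A B))
      = ?D * ([:smult u A:] * in_Y A + bezoutian A B)"
    by (simp only: bez_numerator_eq[symmetric] bez_numerator_oplusN_lin[OF assms]
        distrib_left)
  then show ?thesis
    by (rule mult_left_cancel[THEN iffD1, rotated]) simp
qed

lemma coeff_bezoutian_eq_0:
  fixes A B :: "'a::field poly"
  assumes "degree A \<le> n" "degree B \<le> n" "n \<le> j"
  shows "coeff (bezoutian A B) j = 0"
proof (cases "bezoutian A B = 0")
  case False
  have "degree (bez_numerator A B) \<le> n"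
    using assms(1,2) by (intro degree_le) (simp add: coeff_bez_numerator coeff_eq_0)
  moreover have "degree (bez_numerator A B) = 1 + degree (bezoutian A B)"
    unfolding bez_numerator_eq using False by (subst degree_mult_eq) simp_all
  ultimately show ?thesis
    using assms(3) by (simp add: coeff_eq_0)
qed simp

lemma coeff_coeff_bezoutian_eq_0:
  fixes A B :: "'a::field poly"
  assumes "degree A \<le> n" "degree B \<le> n" "n \<le> i"
  shows "coeff (coeff (bezoutian A B) k) i = 0"
  using assms(3)
proof (induction k arbitrary: i)
  case 0
  have "coeff (coeff (bez_numerator A B) 0) (Suc i) = coeff (coeff (bezoutian A B) 0) i"
    by (simp add: bez_numerator_eq coeff_X_minus_Y_mult)
  moreover have "coeff (coeff (bez_numerator A B) 0) (Suc i) = 0"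
    using assms(1,2) 0 by (simp add: coeff_bez_numerator coeff_eq_0)
  ultimately show ?case by simp
next
  case (Suc k)
  have "coeff (coeff (bez_numerator A B) (Suc k)) (Suc i) =
          coeff (coeff (bezoutian A B) (Suc k)) i - coeff (coeff (bezoutian A B) k) (Suc i)"
    by (simp add: bez_numerator_eq coeff_X_minus_Y_mult)
  moreover have "coeff (coeff (bez_numerator A B) (Suc k)) (Suc i) = 0"
    using assms(1,2) Suc.prems by (simp add: coeff_bez_numerator coeff_eq_0)
  ultimately show ?case
    using Suc.IH Suc.prems by simp
qed

lemma bez_mat_oplusN_lin:
  fixes A B :: "'a::field poly"
  assumes "u \<noteq> 0" "k < n" "l < n"
  shows "bez_mat n (fst (oplusN_lin u A B)) (snd (oplusN_lin u A B)) $$ (k, l)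
     = u * coeff A k * coeff A l + coeff (coeff (bezoutian A B) l) k"
  using assms unfolding bez_mat_def bezoutian_oplusN_lin[OF assms(1)]
  by (simp add: coeff_map_poly mult_ac)

lemma transpose_mult_mult_index:
  fixes P G :: "'a::comm_ring_1 mat"
  assumes "P \<in> carrier_mat m m" "G \<in> carrier_mat m m" "i < m" "j < m"
  shows "(transpose_mat P * G * P) $$ (i, j) =
           (\<Sum>k<m. P $$ (k, i) * (\<Sum>l<m. P $$ (l, j) * G $$ (k, l)))"
  using assms by (simp add: scalar_prod_def atLeast0LessThan mult.commute)

definition shear_mat :: "nat \<Rightarrow> (nat \<Rightarrow> 'a::comm_ring_1) \<Rightarrow> 'a mat" where
  "shear_mat n a = mat (n + 1) (n + 1) (\<lambda>(i, j).
     if j = 0 then (if i = n then (-1) ^ n else 0)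
     else (if i = j - 1 then 1 else 0) - (if i = n then a (j - 1) else 0))"

lemma shear_mat_carrier: "shear_mat n a \<in> carrier_mat (n + 1) (n + 1)"
  unfolding shear_mat_def by simp

lemma sum_shear_mat_col:
  assumes "j < n + 1"
  shows "(\<Sum>k<n + 1. shear_mat n a $$ (k, j) * F k) =
           (if j = 0 then (-1) ^ n * F n else F (j - 1) - a (j - 1) * F n)"
proof (cases j)
  case 0
  have "(\<Sum>k<n + 1. shear_mat n a $$ (k, j) * F k) =
          (\<Sum>k<n + 1. if k = n then (-1) ^ n * F k else 0)"
    by (rule sum.cong) (auto simp: shear_mat_def 0)
  then show ?thesis
    using 0 by simp
next
  case (Suc i)
  have "(\<Sum>k<n + 1. shear_mat n a $$ (k, j) * F k) =
          (\<Sum>k<n + 1. (if k = i then F k else 0) - (if k = n then a i * F k else 0))"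
    using assms Suc by (intro sum.cong) (auto simp: shear_mat_def)
  then show ?thesis
    using assms Suc by (simp add: sum_subtractf)
qed

lemma det_shear_mat: "det (shear_mat n a) = 1"
proof -
  have "mat_delete (shear_mat n a) n 0 = 1\<^sub>m n"
    by (rule eq_matI) (auto simp: mat_delete_def shear_mat_def)
  then have cofactor: "cofactor (shear_mat n a) n 0 = (-1) ^ n"
    by (simp add: cofactor_def)
  have "det (shear_mat n a) = (\<Sum>i<n + 1. shear_mat n a $$ (i, 0) * cofactor (shear_mat n a) i 0)"
    by (rule laplace_expansion_column[OF shear_mat_carrier]) simp
  also have "\<dots> = (-1) ^ n * (-1) ^ n"
    by (subst sum_shear_mat_col) (simp_all add: cofactor)
  finally show ?thesis
    by simp
qed

lemma shear_mat_congruence: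
  fixes G :: "'a::comm_ring_1 mat" and a :: "nat \<Rightarrow> 'a"
  assumes G: "G \<in> carrier_mat (n + 1) (n + 1)"
    and G_eq: "\<And>k l. k < n + 1 \<Longrightarrow> l < n + 1 \<Longrightarrow> G $$ (k, l) = u * a k * a l + c k l"
    and "a n = 1" and "\<And>l. c n l = 0" and "\<And>k. c k n = 0"
  shows "transpose_mat (shear_mat n a) * G * shear_mat n a =
           four_block_mat (mat 1 1 (\<lambda>_. u)) (0\<^sub>m 1 n) (0\<^sub>m n 1) (mat n n (\<lambda>(i, j). c i j))"
    (is "?lhs = ?rhs")
proof (rule eq_matI)
  let ?P = "shear_mat n a"
  let ?s = "\<lambda>j. if j = 0 then (-1) ^ n else 0 :: 'a"
  let ?e = "\<lambda>j k. if j = 0 then 0 else c k (j - 1)"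
  fix i j assume "i < dim_row ?rhs" "j < dim_col ?rhs"
  then have i: "i < n + 1" and j: "j < n + 1" by simp_all
  have inner: "(\<Sum>l<n + 1. ?P $$ (l, j) * G $$ (k, l)) = u * a k * ?s j + ?e j k"
    if "k < n + 1" for k
  proof -
    have "(\<Sum>l<n + 1. ?P $$ (l, j) * G $$ (k, l)) =
            (\<Sum>l<n + 1. ?P $$ (l, j) * (u * a k * a l + c k l))"
      using that G_eq by (intro sum.cong) simp_all
    also have "\<dots> = u * a k * ?s j + ?e j k"
      using j assms(3,5) by (subst sum_shear_mat_col) (simp_all add: algebra_simps)
    finally show ?thesis .
  qed
  have "?lhs $$ (i, j) = (\<Sum>k<n + 1. ?P $$ (k, i) * (u * a k * ?s j + ?e j k))"
    using transpose_mult_mult_index[OF shear_mat_carrier G i j] inner by simp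
  also have "\<dots> = u * ?s i * ?s j + (if i = 0 then 0 else ?e j (i - 1))"
    using i assms(3,4) by (subst sum_shear_mat_col) (simp_all add: algebra_simps)
  also have "\<dots> = ?rhs $$ (i, j)"
    using i j by (cases i; cases j) (simp_all add: mult.assoc)
  finally show "?lhs $$ (i, j) = ?rhs $$ (i, j)" .
qed (simp_all add: shear_mat_def)

theorem lemma3p15:
  fixes A B :: "'a::field poly" and u :: 'a and n :: nat
  assumes "pointed_rat_fun n A B" and "u \<noteq> 0"
  shows "\<exists>P \<in> carrier_mat (n+1) (n+1). det P = 1 \<and>
           transpose_mat P * bez_mat (n+1) (fst (oplusN_lin u A B)) (snd (oplusN_lin u A B)) * P
           = four_block_mat (mat 1 1 (\<lambda>_. u)) (0\<^sub>m 1 n) (0\<^sub>m n 1) (bez_mat n A B)"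
proof -
  have A: "degree A \<le> n" "coeff A n = 1" and B: "degree B \<le> n"
    using assms(1) unfolding pointed_rat_fun_def by auto
  let ?G = "bez_mat (n + 1) (fst (oplusN_lin u A B)) (snd (oplusN_lin u A B))"
  have "transpose_mat (shear_mat n (coeff A)) * ?G * shear_mat n (coeff A) =
          four_block_mat (mat 1 1 (\<lambda>_. u)) (0\<^sub>m 1 n) (0\<^sub>m n 1) (bez_mat n A B)"
    unfolding bez_mat_def[of n]
  proof (rule shear_mat_congruence)
    show "?G \<in> carrier_mat (n + 1) (n + 1)"
      by (simp add: bez_mat_def)
    show "?G $$ (k, l) = u * coeff A k * coeff A l + coeff (coeff (bezoutian A B) l) k"
      if "k < n + 1" "l < n + 1" for k l
      using assms(2) that by (rule bez_mat_oplusN_lin)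
  qed (use A B in \<open>simp_all add: coeff_bezoutian_eq_0 coeff_coeff_bezoutian_eq_0\<close>)
  then show ?thesis
    using shear_mat_carrier det_shear_mat by blast
qed

end
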